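(* For every priority profile $\succ=(\succ_s)_{s\in S}$ in which every $\succ_s$ is a partial order on $I$, there exists $\succ'\in\mathcal{E}(\succ)$ such that $f^{\succ'}\subseteq f^{\succ}$.
   Context: A partial order on $I$ is an asymmetric and transitive relation; a total order is a partial order that is also negatively transitive and complete. School choice setup: $I$ is a finite set of students with $|I|\ge 3$, $S$ a finite set of schools. Each student $i$ has a total order $P_i$ on $S\cup\{\emptyset\}$; $sR_is'$ means $sP_is'$ or $s=s'$. Each school $s$ has capacity $q_s\in\mathbb{Z}_{++}$ and an asymmetric priority relation $\succ_s$ on $I$. A matching $\mu$ assigns each $i$ to $\mu(i)\in S\cup\{\emptyset\}$, $\mu(s)=\{i:\mu(i)=s\}$, $|\mu(s)|\le q_s$. $\mu$ is stable for $\succ$ if it is individually rational ($\mu(i)R_i\emptyset$ for all $i$), non-wasteful ($sP_i\mu(i)$ implies $|\mu(s)|=q_s$) and fair (no $s$, $j\in\mu(s)$, $i\notin\mu(s)$ with $sR_i\mu(i)$ and $(i,j)\in\succ_s$). $\mu$ is Pareto dominated by $\mu'$ if $\mu'(i)R_i\mu(i)$ for all $i$ and $\mu'(i)P_i\mu(i)$ for some $i$. An SOSM for $\succ$ is a stable matching for $\succ$ not Pareto dominated by any stable matching for $\succ$; $f^\succ$ denotes the set of SOSMs for $\succ$. An extension of $\succ_s$ is a total order on $I$ containing $\succ_s$; $\mathcal{E}(\succ)$ is the set of profiles $(\succ'_s)_{s\in S}$ with each $\succ'_s$ an extension of $\succ_s$. *)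

theory Defs
  imports Main
begin

text \<open>Schools have type 's, students type 'i; the outside option (unassigned) is None.\<close>

definition strict_partial_order_on :: "'a set \<Rightarrow> ('a \<times> 'a) set \<Rightarrow> bool" where
  "strict_partial_order_on A r \<longleftrightarrow> r \<subseteq> A \<times> A \<and>
     (\<forall>x y. (x, y) \<in> r \<longrightarrow> (y, x) \<notin> r) \<and>
     (\<forall>x y z. (x, y) \<in> r \<longrightarrow> (y, z) \<in> r \<longrightarrow> (x, z) \<in> r)"

definition strict_total_order_on :: "'a set \<Rightarrow> ('a \<times> 'a) set \<Rightarrow> bool" where
  "strict_total_order_on A r \<longleftrightarrow> strict_partial_order_on A r \<and>
     (\<forall>x\<in>A. \<forall>y\<in>A. \<forall>z\<in>A. (x, z) \<in> r \<longrightarrow> (x, y) \<in> r \<or> (y, z) \<in> r) \<and>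
     (\<forall>x\<in>A. \<forall>y\<in>A. x \<noteq> y \<longrightarrow> (x, y) \<in> r \<or> (y, x) \<in> r)"

definition weakpref :: "('s option \<times> 's option) set \<Rightarrow> 's option \<Rightarrow> 's option \<Rightarrow> bool" where
  "weakpref Pi x y \<longleftrightarrow> (x, y) \<in> Pi \<or> x = y"

definition is_matching :: "'i set \<Rightarrow> 's set \<Rightarrow> ('s \<Rightarrow> nat) \<Rightarrow> ('i \<Rightarrow> 's option) \<Rightarrow> bool" where
  "is_matching I S q \<mu> \<longleftrightarrow>
     (\<forall>i\<in>I. \<mu> i = None \<or> the (\<mu> i) \<in> S) \<and>
     (\<forall>i. i \<notin> I \<longrightarrow> \<mu> i = None) \<and>
     (\<forall>s\<in>S. card {i\<in>I. \<mu> i = Some s} \<le> q s)"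

definition stable ::
  "'i set \<Rightarrow> 's set \<Rightarrow> ('i \<Rightarrow> ('s option \<times> 's option) set) \<Rightarrow> ('s \<Rightarrow> nat)
    \<Rightarrow> ('s \<Rightarrow> ('i \<times> 'i) set) \<Rightarrow> ('i \<Rightarrow> 's option) \<Rightarrow> bool" where
  "stable I S P q pri \<mu> \<longleftrightarrow> is_matching I S q \<mu> \<and>
     (\<forall>i\<in>I. weakpref (P i) (\<mu> i) None) \<and>
     (\<forall>i\<in>I. \<forall>s\<in>S. (Some s, \<mu> i) \<in> P i \<longrightarrow> card {j\<in>I. \<mu> j = Some s} = q s) \<and>
     \<not> (\<exists>s\<in>S. \<exists>j\<in>I. \<exists>i\<in>I. \<mu> j = Some s \<and> \<mu> i \<noteq> Some s \<and>
           weakpref (P i) (Some s) (\<mu> i) \<and> (i, j) \<in> pri s)"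

definition pareto_dominates ::
  "'i set \<Rightarrow> ('i \<Rightarrow> ('s option \<times> 's option) set) \<Rightarrow> ('i \<Rightarrow> 's option) \<Rightarrow> ('i \<Rightarrow> 's option) \<Rightarrow> bool" where
  "pareto_dominates I P \<mu>' \<mu> \<longleftrightarrow>
     (\<forall>i\<in>I. weakpref (P i) (\<mu>' i) (\<mu> i)) \<and> (\<exists>i\<in>I. (\<mu>' i, \<mu> i) \<in> P i)"

text \<open>f^pri: the set of stable matchings not Pareto dominated by any stable matching.\<close>
definition SOSM ::
  "'i set \<Rightarrow> 's set \<Rightarrow> ('i \<Rightarrow> ('s option \<times> 's option) set) \<Rightarrow> ('s \<Rightarrow> nat)
    \<Rightarrow> ('s \<Rightarrow> ('i \<times> 'i) set) \<Rightarrow> ('i \<Rightarrow> 's option) set" where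
  "SOSM I S P q pri = {\<mu>. stable I S P q pri \<mu> \<and>
      \<not> (\<exists>\<mu>'. stable I S P q pri \<mu>' \<and> pareto_dominates I P \<mu>' \<mu>)}"

text \<open>\<E>(pri): profiles where each school's relation is a total order on I extending pri s.\<close>
definition extensions :: "'i set \<Rightarrow> 's set \<Rightarrow> ('s \<Rightarrow> ('i \<times> 'i) set) \<Rightarrow> ('s \<Rightarrow> ('i \<times> 'i) set) set" where
  "extensions I S pri = {pri'. \<forall>s\<in>S. strict_total_order_on I (pri' s) \<and> pri s \<subseteq> pri' s}"

end

theory Submission
  imports Defs "HOL-Library.Product_Lexorder"
begin

text \<open>
  If no stable matching exists for \<open>\<succ>\<close>, none exists for any extension either. Otherwise fix
  an SOSM \<open>\<mu>\<close> for \<open>\<succ>\<close> and break ties so that, at every school \<open>s\<close>, the students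
  \<open>\<mu>\<close> assigns to \<open>s\<close> rank above all students who envy \<open>s\<close>; since \<open>\<mu>\<close> is fair this is
  consistent with \<open>\<succ>\<^sub>s\<close>, and \<open>\<mu>\<close> remains stable for the resulting strict profile \<open>\<succ>'\<close>.
  Under strict priorities the student-wise better of two stable matchings is again stable
  (a counting argument over the schools of the students who gain), so every SOSM \<open>\<nu>\<close> of
  \<open>\<succ>'\<close> is weakly preferred to \<open>\<mu>\<close> by all students. As \<open>\<nu>\<close> is also stable for \<open>\<succ>\<close>
  and \<open>\<mu>\<close> is not Pareto dominated, \<open>\<nu> = \<mu>\<close>.
\<close>

lemma strict_total_order_onD:
  assumes "strict_total_order_on A r"
  shows "r \<subseteq> A \<times> A" and "(x, y) \<in> r \<Longrightarrow> (y, x) \<notin> r"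
    and "(x, y) \<in> r \<Longrightarrow> (y, z) \<in> r \<Longrightarrow> (x, z) \<in> r"
    and "x \<in> A \<Longrightarrow> y \<in> A \<Longrightarrow> x \<noteq> y \<Longrightarrow> (x, y) \<in> r \<or> (y, x) \<in> r"
proof -
  have "strict_partial_order_on A r" and "\<forall>x\<in>A. \<forall>y\<in>A. x \<noteq> y \<longrightarrow> (x, y) \<in> r \<or> (y, x) \<in> r"
    using assms unfolding strict_total_order_on_def by blast+
  then show "r \<subseteq> A \<times> A" and "(x, y) \<in> r \<Longrightarrow> (y, x) \<notin> r"
    and "(x, y) \<in> r \<Longrightarrow> (y, z) \<in> r \<Longrightarrow> (x, z) \<in> r"
    and "x \<in> A \<Longrightarrow> y \<in> A \<Longrightarrow> x \<noteq> y \<Longrightarrow> (x, y) \<in> r \<or> (y, x) \<in> r"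
    unfolding strict_partial_order_on_def by blast+
qed

lemma strict_partial_order_on_acyclic:
  "strict_partial_order_on I r \<Longrightarrow> acyclic r"
  unfolding strict_partial_order_on_def acyclic_def by (metis trancl_id transI)

lemma finite_acyclic_extends_to_strict_total_order:
  assumes "finite I" and "R \<subseteq> I \<times> I" and "acyclic R"
  obtains r where "strict_total_order_on I r" and "R \<subseteq> r"
proof -
  \<comment> \<open>Order by the number of \<open>R\<^sup>+\<close>-predecessors, breaking ties by an injection into \<open>\<nat>\<close>.\<close>
  obtain g :: "'a \<Rightarrow> nat" where g: "inj_on g I"
    using finite_imp_inj_to_nat_seg[OF \<open>finite I\<close>] by blast
  define h where "h x = card {y\<in>I. (y, x) \<in> R\<^sup>+}" for x
  define r where "r = {(x, y). x \<in> I \<and> y \<in> I \<and> (h x, g x) < (h y, g y)}"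
  have h_less: "h x < h y" if "(x, y) \<in> R" for x y
  proof -
    have "x \<in> I" using that \<open>R \<subseteq> I \<times> I\<close> by blast
    then have "{z\<in>I. (z, x) \<in> R\<^sup>+} \<subset> {z\<in>I. (z, y) \<in> R\<^sup>+}"
      using that \<open>acyclic R\<close> by (auto simp: acyclic_def intro: trancl_into_trancl)
    then show ?thesis
      unfolding h_def by (rule psubset_card_mono[rotated]) (use \<open>finite I\<close> in simp)
  qed
  have "strict_total_order_on I r"
    using g unfolding strict_total_order_on_def strict_partial_order_on_def r_def
    by auto (metis inj_onD linorder_neqE_nat)
  moreover have "R \<subseteq> r"
    using h_less \<open>R \<subseteq> I \<times> I\<close> by (auto simp: r_def)
  ultimately show thesis by (rule that)
qed

lemma acyclic_union_times:
  assumes "trans r" and "irrefl r" and "\<forall>e\<in>E. \<forall>m\<in>M. (e, m) \<notin> r\<^sup>="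
  shows "acyclic (r \<union> M \<times> E)"
proof -
  \<comment> \<open>A path can use an edge of \<open>M \<times> E\<close> at most once, since \<open>r\<close> never leads back from \<open>E\<close> to \<open>M\<close>.\<close>
  have paths: "(r \<union> M \<times> E)\<^sup>+ \<subseteq> r \<union> r\<^sup>= O (M \<times> E) O r\<^sup>="
  proof (rule subrelI)
    fix x z assume "(x, z) \<in> (r \<union> M \<times> E)\<^sup>+"
    then show "(x, z) \<in> r \<union> r\<^sup>= O (M \<times> E) O r\<^sup>="
    proof (induction rule: trancl_induct)
      case (step y z)
      then show ?case
        using assms(1,3) by (auto dest: transD)
    qed blast
  qed
  show ?thesis
    unfolding acyclic_def
  proof (intro allI notI)
    fix x assume "(x, x) \<in> (r \<union> M \<times> E)\<^sup>+"
    then have "(x, x) \<in> r \<or> (\<exists>m\<in>M. \<exists>e\<in>E. (e, x) \<in> r\<^sup>= \<and> (x, m) \<in> r\<^sup>=)"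
      using paths by blast
    then show False
      using assms by (auto simp: irrefl_def dest: transD)
  qed
qed

lemma extensionsD:
  assumes "pri' \<in> extensions I S pri" and "s \<in> S"
  shows "strict_total_order_on I (pri' s)" and "pri s \<subseteq> pri' s"
  using assms unfolding extensions_def by blast+

lemma extension_containing_acyclic:
  assumes "finite I" and "\<forall>s\<in>S. pri s \<subseteq> R s \<and> R s \<subseteq> I \<times> I \<and> acyclic (R s)"
  obtains pri' where "pri' \<in> extensions I S pri" and "\<forall>s\<in>S. R s \<subseteq> pri' s"
proof -
  have "\<forall>s\<in>S. \<exists>r. strict_total_order_on I r \<and> R s \<subseteq> r"
    using finite_acyclic_extends_to_strict_total_order assms by metis
  then obtain pri' where "\<forall>s\<in>S. strict_total_order_on I (pri' s) \<and> R s \<subseteq> pri' s"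
    by metis
  then show thesis
    using that assms unfolding extensions_def by blast
qed

lemma extensions_nonempty:
  assumes "finite I" and "\<forall>s\<in>S. strict_partial_order_on I (pri s)"
  shows "extensions I S pri \<noteq> {}"
proof -
  have "\<forall>s\<in>S. pri s \<subseteq> pri s \<and> pri s \<subseteq> I \<times> I \<and> acyclic (pri s)"
  proof
    fix s assume "s \<in> S"
    have spo: "strict_partial_order_on I (pri s)"
      using assms(2) \<open>s \<in> S\<close> by blast
    then have "pri s \<subseteq> I \<times> I"
      by (simp add: strict_partial_order_on_def)
    with strict_partial_order_on_acyclic[OF spo]
    show "pri s \<subseteq> pri s \<and> pri s \<subseteq> I \<times> I \<and> acyclic (pri s)"
      by blast
  qed
  then obtain pri' where "pri' \<in> extensions I S pri"
    by (rule extension_containing_acyclic[OF assms(1)])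
  then show ?thesis by blast
qed

lemma is_matching_range: "is_matching I S q \<mu> \<Longrightarrow> \<mu> i \<in> insert None (Some ` S)"
  unfolding is_matching_def by (cases "i \<in> I") force+

lemma is_matching_outside: "is_matching I S q \<mu> \<Longrightarrow> i \<notin> I \<Longrightarrow> \<mu> i = None"
  unfolding is_matching_def by blast

definition assigned :: "'i set \<Rightarrow> ('i \<Rightarrow> 's option) \<Rightarrow> 's \<Rightarrow> 'i set" where
  "assigned I \<mu> s = {i\<in>I. \<mu> i = Some s}"

definition envious ::
  "'i set \<Rightarrow> ('i \<Rightarrow> ('s option \<times> 's option) set) \<Rightarrow> ('i \<Rightarrow> 's option) \<Rightarrow> 's \<Rightarrow> 'i set" where
  "envious I P \<mu> s = {i\<in>I. \<mu> i \<noteq> Some s \<and> (Some s, \<mu> i) \<in> P i}"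

lemma card_assigned_to:
  assumes "finite I" and "finite T"
  shows "card {i\<in>I. \<mu> i \<in> Some ` T} = (\<Sum>s\<in>T. card (assigned I \<mu> s))"
proof -
  have "{i\<in>I. \<mu> i \<in> Some ` T} = (\<Union>s\<in>T. assigned I \<mu> s)"
    unfolding assigned_def by blast
  also have "card \<dots> = (\<Sum>s\<in>T. card (assigned I \<mu> s))"
    using assms by (intro card_UN_disjoint) (auto simp: assigned_def)
  finally show ?thesis .
qed

lemma stable_iff:
  "stable I S P q pri \<mu> \<longleftrightarrow> is_matching I S q \<mu> \<and>
     (\<forall>i\<in>I. weakpref (P i) (\<mu> i) None) \<and>
     (\<forall>i\<in>I. \<forall>s\<in>S. (Some s, \<mu> i) \<in> P i \<longrightarrow> card (assigned I \<mu> s) = q s) \<and>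
     (\<forall>s\<in>S. pri s \<inter> envious I P \<mu> s \<times> assigned I \<mu> s = {})"
  unfolding stable_def assigned_def envious_def weakpref_def by (auto; blast)

lemma stable_is_matching: "stable I S P q pri \<mu> \<Longrightarrow> is_matching I S q \<mu>"
  unfolding stable_iff by blast

lemma stable_individually_rational:
  "stable I S P q pri \<mu> \<Longrightarrow> i \<in> I \<Longrightarrow> weakpref (P i) (\<mu> i) None"
  unfolding stable_iff by blast

lemma stable_non_wasteful:
  "stable I S P q pri \<mu> \<Longrightarrow> i \<in> I \<Longrightarrow> s \<in> S \<Longrightarrow> (Some s, \<mu> i) \<in> P i
    \<Longrightarrow> card (assigned I \<mu> s) = q s"
  unfolding stable_iff by blast

lemma stable_fair:
  "stable I S P q pri \<mu> \<Longrightarrow> s \<in> S \<Longrightarrow> pri s \<inter> envious I P \<mu> s \<times> assigned I \<mu> s = {}"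
  unfolding stable_iff by blast

lemma stable_antimono_priority:
  assumes "\<forall>s\<in>S. pri s \<subseteq> pri' s" and "stable I S P q pri' \<mu>"
  shows "stable I S P q pri \<mu>"
  using assms unfolding stable_iff by blast

lemma stable_of_SOSM_of_extension:
  assumes "pri' \<in> extensions I S pri" and "\<nu> \<in> SOSM I S P q pri'"
  shows "stable I S P q pri \<nu>"
proof (rule stable_antimono_priority)
  show "\<forall>s\<in>S. pri s \<subseteq> pri' s"
    using extensionsD(2)[OF assms(1)] by blast
  show "stable I S P q pri' \<nu>"
    using assms(2) unfolding SOSM_def by blast
qed

lemma stable_for_some_extension:
  assumes "finite I" and "\<forall>s\<in>S. strict_partial_order_on I (pri s)" and "stable I S P q pri \<mu>"
  obtains pri' where "pri' \<in> extensions I S pri" and "stable I S P q pri' \<mu>"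
proof -
  \<comment> \<open>Rank everyone assigned to \<open>s\<close> above everyone envying \<open>s\<close>; fairness of \<open>\<mu>\<close> keeps this acyclic.\<close>
  define R where "R s = pri s \<union> assigned I \<mu> s \<times> envious I P \<mu> s" for s
  have "\<forall>s\<in>S. pri s \<subseteq> R s \<and> R s \<subseteq> I \<times> I \<and> acyclic (R s)"
  proof (intro ballI conjI)
    fix s assume "s \<in> S"
    have "trans (pri s)" and "irrefl (pri s)" and "pri s \<subseteq> I \<times> I"
      using assms(2) \<open>s \<in> S\<close> unfolding strict_partial_order_on_def trans_def irrefl_def by blast+
    moreover have "(e, m) \<notin> (pri s)\<^sup>=" if "e \<in> envious I P \<mu> s" "m \<in> assigned I \<mu> s" for e m
      using stable_fair[OF assms(3) \<open>s \<in> S\<close>] that unfolding envious_def assigned_def by auto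
    ultimately show "R s \<subseteq> I \<times> I" and "acyclic (R s)"
      unfolding R_def by (auto simp: envious_def assigned_def intro!: acyclic_union_times)
  qed (simp add: R_def)
  then obtain pri' where pri': "pri' \<in> extensions I S pri" and "\<forall>s\<in>S. R s \<subseteq> pri' s"
    by (rule extension_containing_acyclic[OF assms(1)])
  have "pri' s \<inter> envious I P \<mu> s \<times> assigned I \<mu> s = {}" if "s \<in> S" for s
  proof -
    have "assigned I \<mu> s \<times> envious I P \<mu> s \<subseteq> pri' s"
      using \<open>\<forall>s\<in>S. R s \<subseteq> pri' s\<close> that unfolding R_def by blast
    then show ?thesis
      using strict_total_order_onD(2)[OF extensionsD(1)[OF pri' that]] by blast
  qed
  then have "stable I S P q pri' \<mu>"
    using assms(3) unfolding stable_iff by blast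
  with pri' show thesis by (rule that)
qed

lemma eq_SOSM_if_weakly_preferred:
  assumes "\<mu> \<in> SOSM I S P q pri" and "stable I S P q pri \<nu>"
    and "\<forall>i\<in>I. weakpref (P i) (\<nu> i) (\<mu> i)"
  shows "\<nu> = \<mu>"
proof
  fix i
  show "\<nu> i = \<mu> i"
  proof (cases "i \<in> I")
    case True
    show ?thesis
    proof (rule ccontr)
      assume "\<nu> i \<noteq> \<mu> i"
      then have "pareto_dominates I P \<nu> \<mu>"
        using assms(3) True unfolding pareto_dominates_def weakpref_def by blast
      then show False
        using assms(1,2) unfolding SOSM_def by blast
    qed
  next
    case False
    have "stable I S P q pri \<mu>"
      using assms(1) unfolding SOSM_def by blast
    then show ?thesis
      using is_matching_outside[OF stable_is_matching False] assms(2) by metis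
  qed
qed

locale market =
  fixes I :: "'i set" and S :: "'s set"
    and P :: "'i \<Rightarrow> ('s option \<times> 's option) set" and q :: "'s \<Rightarrow> nat"
  assumes finite_I: "finite I" and finite_S: "finite S"
    and pref_order: "i \<in> I \<Longrightarrow> strict_total_order_on (insert None (Some ` S)) (P i)"
begin

lemma pref_asym: "i \<in> I \<Longrightarrow> (x, y) \<in> P i \<Longrightarrow> (y, x) \<notin> P i"
  using strict_total_order_onD(2)[OF pref_order] by blast

lemma pref_weakpref_trans: "i \<in> I \<Longrightarrow> (x, y) \<in> P i \<Longrightarrow> weakpref (P i) y z \<Longrightarrow> (x, z) \<in> P i"
  using strict_total_order_onD(3)[OF pref_order] unfolding weakpref_def by blast

lemma weakpref_or_pref:
  assumes "i \<in> I" and "x \<in> insert None (Some ` S)" and "y \<in> insert None (Some ` S)"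
  shows "weakpref (P i) x y \<or> (y, x) \<in> P i"
  using strict_total_order_onD(4)[OF pref_order[OF assms(1)] assms(2,3)] unfolding weakpref_def by blast

lemma SOSM_nonempty:
  assumes "stable I S P q pri \<mu>\<^sub>0"
  shows "SOSM I S P q pri \<noteq> {}"
proof -
  define rank where "rank i x = card {y \<in> insert None (Some ` S). (y, x) \<in> P i}" for i x
  define cost where "cost \<mu> = (\<Sum>i\<in>I. rank i (\<mu> i))" for \<mu> :: "'i \<Rightarrow> 's option"
  have rank_less: "rank i x < rank i y" if "i \<in> I" and "(x, y) \<in> P i" for i x y
  proof -
    have "{z \<in> insert None (Some ` S). (z, x) \<in> P i} \<subseteq> {z \<in> insert None (Some ` S). (z, y) \<in> P i}"
      using pref_weakpref_trans[OF \<open>i \<in> I\<close> _ weakpref_def[THEN iffD2, OF disjI1, OF that(2)]]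
      by blast
    moreover have "x \<in> insert None (Some ` S)"
      using strict_total_order_onD(1)[OF pref_order[OF \<open>i \<in> I\<close>]] that(2) by blast
    moreover have "(x, x) \<notin> P i"
      using pref_asym[OF \<open>i \<in> I\<close>] by blast
    ultimately have "{z \<in> insert None (Some ` S). (z, x) \<in> P i} \<subset> {z \<in> insert None (Some ` S). (z, y) \<in> P i}"
      using that(2) by blast
    then show ?thesis
      unfolding rank_def by (rule psubset_card_mono[rotated]) (use finite_S in simp)
  qed
  have cost_less: "cost \<mu>' < cost \<mu>" if "pareto_dominates I P \<mu>' \<mu>" for \<mu> \<mu>'
    unfolding cost_def
  proof (rule sum_strict_mono_ex1[OF finite_I])
    show "\<forall>i\<in>I. rank i (\<mu>' i) \<le> rank i (\<mu> i)"
      using that rank_less unfolding pareto_dominates_def weakpref_def by fastforce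
    show "\<exists>i\<in>I. rank i (\<mu>' i) < rank i (\<mu> i)"
      using that rank_less unfolding pareto_dominates_def by blast
  qed
  obtain \<mu> where "stable I S P q pri \<mu>" and "\<forall>\<mu>'. stable I S P q pri \<mu>' \<longrightarrow> cost \<mu> \<le> cost \<mu>'"
    using ex_has_least_nat[of "stable I S P q pri" \<mu>\<^sub>0 cost] assms by blast
  then have "\<mu> \<in> SOSM I S P q pri"
    unfolding SOSM_def using cost_less leD by blast
  then show ?thesis by blast
qed

lemma envious_subset:
  assumes "\<forall>i\<in>I. weakpref (P i) (\<eta> i) (\<mu> i)" and "assigned I \<eta> s = assigned I \<mu> s"
  shows "envious I P \<eta> s \<subseteq> envious I P \<mu> s"
  using assms pref_weakpref_trans unfolding envious_def assigned_def by blast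

lemma stable_combination:
  assumes \<mu>: "stable I S P q pri \<mu>" and \<nu>: "stable I S P q pri \<nu>"
    and from_\<mu>\<nu>: "\<forall>i. \<eta> i = \<mu> i \<or> \<eta> i = \<nu> i"
    and better: "\<forall>i\<in>I. weakpref (P i) (\<eta> i) (\<mu> i) \<and> weakpref (P i) (\<eta> i) (\<nu> i)"
    and seats: "\<forall>s\<in>S. assigned I \<eta> s = assigned I \<mu> s \<or> assigned I \<eta> s = assigned I \<nu> s"
  shows "stable I S P q pri \<eta>"
  unfolding stable_iff
proof (intro conjI ballI impI)
  have m\<mu>: "is_matching I S q \<mu>" and m\<nu>: "is_matching I S q \<nu>"
    using stable_is_matching \<mu> \<nu> by blast+
  show "is_matching I S q \<eta>"
    unfolding is_matching_def
  proof (intro conjI ballI allI impI)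
    show "\<eta> i = None \<or> the (\<eta> i) \<in> S" if "i \<in> I" for i
      using from_\<mu>\<nu>[rule_format, of i] m\<mu> m\<nu> that unfolding is_matching_def by auto
    show "\<eta> i = None" if "i \<notin> I" for i
      using from_\<mu>\<nu>[rule_format, of i] m\<mu> m\<nu> that unfolding is_matching_def by auto
    show "card {i \<in> I. \<eta> i = Some s} \<le> q s" if "s \<in> S" for s
      using seats[rule_format, OF that] m\<mu> m\<nu> that unfolding is_matching_def assigned_def by auto
  qed
  show "weakpref (P i) (\<eta> i) None" if "i \<in> I" for i
    using from_\<mu>\<nu>[rule_format, of i] stable_individually_rational[OF \<mu> that]
      stable_individually_rational[OF \<nu> that] by auto
  show "card (assigned I \<eta> s) = q s" if "i \<in> I" "s \<in> S" "(Some s, \<eta> i) \<in> P i" for i s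
  proof -
    have "(Some s, \<mu> i) \<in> P i" and "(Some s, \<nu> i) \<in> P i"
      using better that pref_weakpref_trans by blast+
    then have "card (assigned I \<mu> s) = q s" and "card (assigned I \<nu> s) = q s"
      using stable_non_wasteful[OF \<mu>] stable_non_wasteful[OF \<nu>] that by blast+
    then show ?thesis
      using seats that by auto
  qed
  show "pri s \<inter> envious I P \<eta> s \<times> assigned I \<eta> s = {}" if "s \<in> S" for s
    using seats that
  proof (elim bspec[elim_format] disjE)
    assume "assigned I \<eta> s = assigned I \<mu> s"
    moreover have "envious I P \<eta> s \<subseteq> envious I P \<mu> s"
      using calculation better envious_subset by blast
    ultimately show ?thesis
      using stable_fair[OF \<mu> that] by blast
  next
    assume "assigned I \<eta> s = assigned I \<nu> s"
    moreover have "envious I P \<eta> s \<subseteq> envious I P \<nu> s"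
      using calculation better envious_subset by blast
    ultimately show ?thesis
      using stable_fair[OF \<nu> that] by blast
  qed
qed

end

locale strict_market = market +
  fixes pri :: "'s \<Rightarrow> ('i \<times> 'i) set"
  assumes pri_order: "s \<in> S \<Longrightarrow> strict_total_order_on I (pri s)"

locale two_stable_matchings = strict_market +
  fixes \<mu> \<nu> :: "'i \<Rightarrow> 's option"
  assumes stable_\<mu>: "stable I S P q pri \<mu>" and stable_\<nu>: "stable I S P q pri \<nu>"
begin

definition gainers :: "'i set" where
  "gainers = {i\<in>I. (\<mu> i, \<nu> i) \<in> P i}"

definition gain_schools :: "'s set" where
  "gain_schools = {s. \<exists>i\<in>gainers. \<mu> i = Some s}"

definition join :: "'i \<Rightarrow> 's option" where
  "join i = (if i \<in> gainers then \<mu> i else \<nu> i)"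

lemma matching_\<mu>: "is_matching I S q \<mu>" and matching_\<nu>: "is_matching I S q \<nu>"
  using stable_is_matching stable_\<mu> stable_\<nu> by blast+

lemma gainer_assigned: "i \<in> gainers \<Longrightarrow> \<exists>s\<in>gain_schools. \<mu> i = Some s"
proof (cases "\<mu> i")
  case None
  assume "i \<in> gainers"
  then have "i \<in> I" and "(None, \<nu> i) \<in> P i"
    using None unfolding gainers_def by auto
  moreover have "weakpref (P i) (\<nu> i) None"
    using stable_individually_rational[OF stable_\<nu> \<open>i \<in> I\<close>] .
  ultimately show ?thesis
    using pref_asym unfolding weakpref_def by metis
qed (auto simp: gain_schools_def)

lemma gain_schools_subset: "gain_schools \<subseteq> S"
proof
  fix s assume "s \<in> gain_schools"
  then obtain i where "\<mu> i = Some s"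
    unfolding gain_schools_def by blast
  then show "s \<in> S"
    using is_matching_range[OF matching_\<mu>, of i] by auto
qed

lemma finite_gain_schools: "finite gain_schools"
  using finite_subset[OF gain_schools_subset finite_S] .

lemma gain_school:
  assumes "s \<in> gain_schools"
  shows "card (assigned I \<nu> s) = q s" and "assigned I \<nu> s - assigned I \<mu> s \<subseteq> gainers"
proof -
  obtain i where "i \<in> I" and \<mu>i: "\<mu> i = Some s" and pref: "(Some s, \<nu> i) \<in> P i"
    using assms unfolding gain_schools_def gainers_def by auto
  have "s \<in> S"
    using assms gain_schools_subset by blast
  then show "card (assigned I \<nu> s) = q s"
    by (rule stable_non_wasteful[OF stable_\<nu> \<open>i \<in> I\<close> _ pref])
  have i_envies: "i \<in> envious I P \<nu> s"
    using \<open>i \<in> I\<close> pref pref_asym unfolding envious_def by fastforce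
  show "assigned I \<nu> s - assigned I \<mu> s \<subseteq> gainers"
  proof
    fix j assume j: "j \<in> assigned I \<nu> s - assigned I \<mu> s"
    then have "j \<in> I" and \<nu>j: "\<nu> j = Some s" and "\<mu> j \<noteq> Some s"
      unfolding assigned_def by auto
    have "(i, j) \<notin> pri s"
      using stable_fair[OF stable_\<nu> \<open>s \<in> S\<close>] i_envies j by blast
    moreover have "i \<noteq> j"
      using i_envies \<nu>j unfolding envious_def by auto
    ultimately have "(j, i) \<in> pri s"
      using strict_total_order_onD(4)[OF pri_order[OF \<open>s \<in> S\<close>] \<open>i \<in> I\<close> \<open>j \<in> I\<close>] by blast
    then have "j \<notin> envious I P \<mu> s"
      using stable_fair[OF stable_\<mu> \<open>s \<in> S\<close>] \<open>i \<in> I\<close> \<mu>i unfolding assigned_def by blast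
    then have "weakpref (P j) (\<mu> j) (Some s)"
      using weakpref_or_pref[OF \<open>j \<in> I\<close> is_matching_range[OF matching_\<mu>]]
        \<open>s \<in> S\<close> \<open>j \<in> I\<close> \<open>\<mu> j \<noteq> Some s\<close>
      unfolding envious_def by blast
    then show "j \<in> gainers"
      using \<open>j \<in> I\<close> \<nu>j \<open>\<mu> j \<noteq> Some s\<close> unfolding gainers_def weakpref_def by simp
  qed
qed

text \<open>The counting step: \<open>\<nu>\<close> fills every gain school, and its newcomers there are gainers, who
  hold seats at gain schools under \<open>\<mu>\<close>; so \<open>\<nu>\<close>'s students at gain schools are among \<open>\<mu>\<close>'s,
  and since \<open>\<mu>\<close> respects the capacities the two sets have the same size.\<close>

lemma seats_of_gain_schools:
  "{i\<in>I. \<nu> i \<in> Some ` gain_schools} = {i\<in>I. \<mu> i \<in> Some ` gain_schools}"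
proof -
  have "{i\<in>I. \<nu> i \<in> Some ` gain_schools} \<subseteq> {i\<in>I. \<mu> i \<in> Some ` gain_schools}"
  proof
    fix i assume "i \<in> {i\<in>I. \<nu> i \<in> Some ` gain_schools}"
    then obtain s where "i \<in> I" and \<nu>i: "\<nu> i = Some s" and s: "s \<in> gain_schools"
      by blast
    show "i \<in> {i\<in>I. \<mu> i \<in> Some ` gain_schools}"
    proof (cases "\<mu> i = Some s")
      case False
      then have "i \<in> gainers"
        using gain_school(2)[OF s] \<open>i \<in> I\<close> \<nu>i unfolding assigned_def by blast
      then show ?thesis
        using gainer_assigned \<open>i \<in> I\<close> by blast
    qed (use \<open>i \<in> I\<close> s in blast)
  qed
  moreover have "card {i\<in>I. \<mu> i \<in> Some ` gain_schools} \<le> card {i\<in>I. \<nu> i \<in> Some ` gain_schools}"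
  proof -
    have "card (assigned I \<mu> s) \<le> card (assigned I \<nu> s)" if "s \<in> gain_schools" for s
      using matching_\<mu> gain_schools_subset gain_school(1)[OF that] that
      unfolding is_matching_def assigned_def by auto
    then show ?thesis
      unfolding card_assigned_to[OF finite_I finite_gain_schools] by (rule sum_mono)
  qed
  ultimately show ?thesis
    using finite_I by (intro card_seteq) auto
qed

lemma non_gainer_unmoved:
  assumes "i \<in> I" and "i \<notin> gainers" and "s \<in> gain_schools"
    and "\<mu> i = Some s \<or> \<nu> i = Some s"
  shows "\<nu> i = \<mu> i"
proof -
  have "\<nu> i = \<mu> i" if "\<nu> i = Some t" and "t \<in> gain_schools" for t
  proof (rule ccontr)
    assume "\<nu> i \<noteq> \<mu> i"
    then have "i \<in> assigned I \<nu> t - assigned I \<mu> t"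
      using that(1) assms(1) unfolding assigned_def by auto
    then show False
      using gain_school(2)[OF that(2)] assms(2) by blast
  qed
  moreover have "\<exists>t\<in>gain_schools. \<nu> i = Some t"
  proof (cases "\<mu> i = Some s")
    case True
    then have "i \<in> {i\<in>I. \<mu> i \<in> Some ` gain_schools}"
      using assms(1,3) by blast
    then show ?thesis
      unfolding seats_of_gain_schools[symmetric] by blast
  qed (use assms(3,4) in blast)
  ultimately show ?thesis by blast
qed

lemma assigned_join:
  "assigned I join s = (if s \<in> gain_schools then assigned I \<mu> s else assigned I \<nu> s)"
proof -
  have "join i = Some s \<longleftrightarrow> (if s \<in> gain_schools then \<mu> i = Some s else \<nu> i = Some s)"
    if "i \<in> I" for i
  proof (cases "i \<in> gainers")
    case True
    then obtain t where "t \<in> gain_schools" and "\<mu> i = Some t" and "\<nu> i \<in> Some ` gain_schools"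
      using gainer_assigned seats_of_gain_schools \<open>i \<in> I\<close> by blast
    then show ?thesis
      using True unfolding join_def by auto
  next
    case False
    then show ?thesis
      using non_gainer_unmoved[OF that False, of s] unfolding join_def by auto
  qed
  then show ?thesis
    unfolding assigned_def by auto
qed

lemma join_weakly_preferred:
  assumes "i \<in> I"
  shows "weakpref (P i) (join i) (\<mu> i)" and "weakpref (P i) (join i) (\<nu> i)"
proof -
  have "weakpref (P i) (\<nu> i) (\<mu> i)" if "i \<notin> gainers"
    using weakpref_or_pref[OF assms is_matching_range[OF matching_\<nu>] is_matching_range[OF matching_\<mu>]]
      that assms unfolding gainers_def by blast
  then show "weakpref (P i) (join i) (\<mu> i)" and "weakpref (P i) (join i) (\<nu> i)"
    unfolding join_def gainers_def weakpref_def by auto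
qed

lemma stable_join: "stable I S P q pri join"
  using stable_combination[OF stable_\<mu> stable_\<nu>] join_weakly_preferred assigned_join
  unfolding join_def by auto

lemma join_dominates: "gainers \<noteq> {} \<Longrightarrow> pareto_dominates I P join \<nu>"
  using join_weakly_preferred unfolding pareto_dominates_def join_def gainers_def by auto

end

lemma (in strict_market) SOSM_weakly_preferred_to_stable:
  assumes "stable I S P q pri \<mu>" and "\<nu> \<in> SOSM I S P q pri" and "i \<in> I"
  shows "weakpref (P i) (\<nu> i) (\<mu> i)"
proof -
  interpret two_stable_matchings I S P q pri \<mu> \<nu>
    using assms(1,2) unfolding SOSM_def by unfold_locales auto
  have "gainers = {}"
    using stable_join join_dominates assms(2) unfolding SOSM_def by blast
  then have "(\<mu> i, \<nu> i) \<notin> P i"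
    using assms(3) unfolding gainers_def by blast
  then show ?thesis
    using weakpref_or_pref[OF assms(3) is_matching_range[OF matching_\<nu>] is_matching_range[OF matching_\<mu>]]
    by blast
qed

theorem corollary3:
  fixes I :: "'i set" and S :: "'s set"
    and P :: "'i \<Rightarrow> ('s option \<times> 's option) set"
    and q :: "'s \<Rightarrow> nat"
    and pri :: "'s \<Rightarrow> ('i \<times> 'i) set"
  assumes "finite I" and "card I \<ge> 3" and "finite S"
    and "\<forall>i\<in>I. strict_total_order_on (insert None (Some ` S)) (P i)"
    and "\<forall>s\<in>S. q s > 0"
    and "\<forall>s\<in>S. strict_partial_order_on I (pri s)"
  shows "\<exists>pri' \<in> extensions I S pri. SOSM I S P q pri' \<subseteq> SOSM I S P q pri"
proof -
  interpret market I S P q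
    using assms(1,3,4) by unfold_locales blast+
  show ?thesis
  proof (cases "SOSM I S P q pri = {}")
    case True
    obtain pri' where pri': "pri' \<in> extensions I S pri"
      using extensions_nonempty[OF assms(1,6)] by blast
    then have "SOSM I S P q pri' = {}"
      using stable_of_SOSM_of_extension[OF pri'] SOSM_nonempty True by blast
    with pri' show ?thesis by blast
  next
    case False
    then obtain \<mu> where \<mu>: "\<mu> \<in> SOSM I S P q pri"
      by blast
    then obtain pri' where pri': "pri' \<in> extensions I S pri" and "stable I S P q pri' \<mu>"
      using stable_for_some_extension[OF assms(1,6)] unfolding SOSM_def by blast
    interpret strict_market I S P q pri'
      using extensionsD(1)[OF pri'] by unfold_locales
    have "\<nu> = \<mu>" if "\<nu> \<in> SOSM I S P q pri'" for \<nu>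
      using eq_SOSM_if_weakly_preferred[OF \<mu> stable_of_SOSM_of_extension[OF pri' that]]
        SOSM_weakly_preferred_to_stable[OF \<open>stable I S P q pri' \<mu>\<close> that] by blast
    with \<mu> pri' show ?thesis by blast
  qed
qed

end
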